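(* Let $V$ be a finite-dimensional real vector space and $X\subseteq V$ a finite or countable set in which every $2$-dimensional linear subset has fundamental vectors, equipped with a suitable ordering $\gamma_1,\gamma_2,\ldots$ with initial segments $X_i=\{\gamma_1,\ldots,\gamma_i\}$. Let $X_m$ be an initial segment and let $U$ be biclosed in $X_m$. Let $\overline{U}$ be the closure of $U$ in $X$. Then $\overline{U}\cap X_m=U$.
   Context: $\mathrm{Span}_+$ denotes nonnegative linear combinations. For $Y\subseteq X$, $B\subseteq Y$: closed in $Y$ if $\alpha,\beta\in B$, $\gamma\in\mathrm{Span}_+(\alpha,\beta)\cap Y$ imply $\gamma\in B$; coclosed if $Y\setminus B$ closed; biclosed if both; weakly separable if $\mathrm{Span}_+(B)\cap\mathrm{Span}_+(Y\setminus B)=\{0\}$; $Y$ is clean if every biclosed subset of $Y$ is weakly separable in $Y$. The closure of $U$ in $X$ is the smallest closed subset of $X$ containing $U$. A linear subset is $X\cap L$ for a subspace $L$. A $2$-dimensional linear subset $Y$ has fundamental vectors $\alpha,\beta\in Y$ if $Y\subseteq\mathrm{Span}_+\{\alpha,\beta\}$ and neither $\alpha$ nor $\beta$ lies in the nonnegative span of the other elements of $Y$. $F\subseteq X$ is full if $F\cap\mathrm{Span}\{\alpha,\beta\}=X\cap\mathrm{Span}\{\alpha,\beta\}$ for all $\alpha,\beta\in F$. An ordering is suitable if (1) in every $2$-dimensional linear subset the fundamental vectors precede all its other vectors, and (2) for every $i$ and $\alpha,\beta,\gamma\in X_i$ there is a full $F\subseteq X$ containing them with $F\cap X_i$ clean.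 *)

theory Defs
  imports "HOL-Analysis.Analysis"
begin

definition nonneg_span :: "'a::real_vector set \<Rightarrow> 'a set" where
  "nonneg_span S = {x. \<exists>F c. finite F \<and> F \<subseteq> S \<and> (\<forall>v\<in>F. 0 \<le> c v) \<and> x = (\<Sum>v\<in>F. c v *\<^sub>R v)}"

definition closed_sub :: "'a::real_vector set \<Rightarrow> 'a set \<Rightarrow> bool" where
  "closed_sub Y B \<longleftrightarrow> B \<subseteq> Y \<and>
     (\<forall>\<alpha>\<in>B. \<forall>\<beta>\<in>B. \<forall>\<gamma>\<in>nonneg_span {\<alpha>, \<beta>} \<inter> Y. \<gamma> \<in> B)"

definition coclosed_sub :: "'a::real_vector set \<Rightarrow> 'a set \<Rightarrow> bool" where
  "coclosed_sub Y B \<longleftrightarrow> B \<subseteq> Y \<and> closed_sub Y (Y - B)"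

definition biclosed_sub :: "'a::real_vector set \<Rightarrow> 'a set \<Rightarrow> bool" where
  "biclosed_sub Y B \<longleftrightarrow> closed_sub Y B \<and> coclosed_sub Y B"

definition weakly_separable :: "'a::real_vector set \<Rightarrow> 'a set \<Rightarrow> bool" where
  "weakly_separable Y B \<longleftrightarrow> nonneg_span B \<inter> nonneg_span (Y - B) = {0}"

definition clean :: "'a::real_vector set \<Rightarrow> bool" where
  "clean Y \<longleftrightarrow> (\<forall>B. B \<subseteq> Y \<longrightarrow> biclosed_sub Y B \<longrightarrow> weakly_separable Y B)"

text \<open>Closure of U in X: the smallest closed subset of X containing U
  (closed subsets are stable under intersection, so this is the intersection of all of them).\<close>
definition closure_in :: "'a::real_vector set \<Rightarrow> 'a set \<Rightarrow> 'a set" where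
  "closure_in X U = \<Inter>{C. C \<subseteq> X \<and> closed_sub X C \<and> U \<subseteq> C}"

definition linear_subset :: "'a::real_vector set \<Rightarrow> 'a set \<Rightarrow> bool" where
  "linear_subset X Y \<longleftrightarrow> (\<exists>L. subspace L \<and> Y = X \<inter> L)"

definition two_dim_linear_subset :: "'a::euclidean_space set \<Rightarrow> 'a set \<Rightarrow> bool" where
  "two_dim_linear_subset X Y \<longleftrightarrow> linear_subset X Y \<and> dim Y = 2"

definition fundamental :: "'a::real_vector set \<Rightarrow> 'a \<Rightarrow> 'a \<Rightarrow> bool" where
  "fundamental Y \<alpha> \<beta> \<longleftrightarrow> \<alpha> \<in> Y \<and> \<beta> \<in> Y \<and> Y \<subseteq> nonneg_span {\<alpha>, \<beta>} \<and>
     \<alpha> \<notin> nonneg_span (Y - {\<alpha>}) \<and> \<beta> \<notin> nonneg_span (Y - {\<beta>})"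

definition full :: "'a::real_vector set \<Rightarrow> 'a set \<Rightarrow> bool" where
  "full X F \<longleftrightarrow> F \<subseteq> X \<and> (\<forall>\<alpha>\<in>F. \<forall>\<beta>\<in>F. F \<inter> span {\<alpha>, \<beta>} = X \<inter> span {\<alpha>, \<beta>})"

text \<open>An ordering of X: g enumerates X injectively on a downward closed index set K
  (K = {..<n} if X is finite with n elements, K = UNIV if X is countably infinite).
  Index i (0-based) corresponds to gamma_(i+1); the initial segment X_i is g ` {..<i},
  defined for {..<i} \<subseteq> K.\<close>
definition ordering_of :: "'a set \<Rightarrow> (nat \<Rightarrow> 'a) \<Rightarrow> nat set \<Rightarrow> bool" where
  "ordering_of X g K \<longleftrightarrow> (\<forall>i\<in>K. \<forall>j<i. j \<in> K) \<and> inj_on g K \<and> g ` K = X"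

definition init_seg :: "(nat \<Rightarrow> 'a) \<Rightarrow> nat \<Rightarrow> 'a set" where
  "init_seg g i = g ` {..<i}"

definition suitable :: "'a::euclidean_space set \<Rightarrow> (nat \<Rightarrow> 'a) \<Rightarrow> nat set \<Rightarrow> bool" where
  "suitable X g K \<longleftrightarrow>
     (\<forall>Y \<alpha> \<beta>. two_dim_linear_subset X Y \<and> fundamental Y \<alpha> \<beta> \<longrightarrow>
        (\<forall>i\<in>K. \<forall>j\<in>K. g i \<in> {\<alpha>, \<beta>} \<and> g j \<in> Y - {\<alpha>, \<beta>} \<longrightarrow> i < j)) \<and>
     (\<forall>i. {..<i} \<subseteq> K \<longrightarrow>
        (\<forall>\<alpha>\<in>init_seg g i. \<forall>\<beta>\<in>init_seg g i. \<forall>\<gamma>\<in>init_seg g i.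
           \<exists>F. full X F \<and> \<alpha> \<in> F \<and> \<beta> \<in> F \<and> \<gamma> \<in> F \<and> clean (F \<inter> init_seg g i)))"

end

theory Submission
  imports Defs
begin

text \<open>Write X_i for init_seg g i. The set U is extended greedily along the ordering: if B is
  biclosed in a set Y not containing 0 and \<gamma> \<notin> Y is nonzero, then B or B \<union> {\<gamma>} is
  biclosed in Y \<union> {\<gamma>}. Of the four ways in which both could fail, three produce a nonzero
  vector lying in a cone over points of B and in a cone over points of Y - B, all inside a full
  set whose trace on Y is clean, contradicting weak separability. The fourth produces in the
  same way opposite vectors v, -\<mu> v in a 2-dimensional linear subset, which is pointed since
  it lies in the cone over its fundamental vectors. The extensions meet X_m in U, so when
  0 \<notin> X their union is a closed set witnessing the claim.

  If 0 = \<gamma>_k with k < m, the only biclosed subsets of X_m are trivial. Otherwise extend U up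
  to a biclosed B in X_k. As 0 lies in every 2-dimensional linear subset but is never
  fundamental, all fundamental vectors lie in X_k. If the nonzero vectors outside X_k are
  collinear, B together with the vectors outside X_k lying in a cone over two points of B is
  closed. If not, X is itself 2-dimensional, hence X_k is clean and X \<inter> cone(B) is closed.\<close>

lemma zero_in_nonneg_span: "0 \<in> nonneg_span S"
  unfolding nonneg_span_def by (intro CollectI exI[of _ "{}"]) auto

lemma nonneg_span_base: "x \<in> S \<Longrightarrow> x \<in> nonneg_span S"
  unfolding nonneg_span_def by (intro CollectI exI[of _ "{x}"] exI[of _ "\<lambda>_. 1"]) auto

lemma nonneg_span_mono: "S \<subseteq> T \<Longrightarrow> nonneg_span S \<subseteq> nonneg_span T"
  unfolding nonneg_span_def by blast

lemma nonneg_span_scale: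
  assumes "x \<in> nonneg_span S" "0 \<le> a"
  shows "a *\<^sub>R x \<in> nonneg_span S"
proof -
  obtain F c where F: "finite F" "F \<subseteq> S" "\<forall>v\<in>F. 0 \<le> c v" "x = (\<Sum>v\<in>F. c v *\<^sub>R v)"
    using assms(1) unfolding nonneg_span_def by blast
  have "a *\<^sub>R x = (\<Sum>v\<in>F. (a * c v) *\<^sub>R v)"
    using F(4) by (simp add: scaleR_sum_right)
  then show ?thesis
    unfolding nonneg_span_def using F assms(2)
    by (intro CollectI exI[of _ F] exI[of _ "\<lambda>v. a * c v"]) auto
qed

lemma nonneg_span_add:
  assumes "x \<in> nonneg_span S" "y \<in> nonneg_span S"
  shows "x + y \<in> nonneg_span S"
proof -
  obtain F1 c1 where F1: "finite F1" "F1 \<subseteq> S" "\<forall>v\<in>F1. 0 \<le> c1 v" "x = (\<Sum>v\<in>F1. c1 v *\<^sub>R v)"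
    using assms(1) unfolding nonneg_span_def by blast
  obtain F2 c2 where F2: "finite F2" "F2 \<subseteq> S" "\<forall>v\<in>F2. 0 \<le> c2 v" "y = (\<Sum>v\<in>F2. c2 v *\<^sub>R v)"
    using assms(2) unfolding nonneg_span_def by blast
  define d1 where "d1 v = (if v \<in> F1 then c1 v else 0)" for v
  define d2 where "d2 v = (if v \<in> F2 then c2 v else 0)" for v
  have "(\<Sum>v\<in>F1 \<union> F2. d1 v *\<^sub>R v) = x"
    unfolding F1(4) by (rule sum.mono_neutral_cong_right) (auto simp: F1 F2 d1_def)
  moreover have "(\<Sum>v\<in>F1 \<union> F2. d2 v *\<^sub>R v) = y"
    unfolding F2(4) by (rule sum.mono_neutral_cong_right) (auto simp: F1 F2 d2_def)
  ultimately have "x + y = (\<Sum>v\<in>F1 \<union> F2. (d1 v + d2 v) *\<^sub>R v)"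
    by (simp add: scaleR_add_left sum.distrib)
  moreover have "\<forall>v\<in>F1 \<union> F2. 0 \<le> d1 v + d2 v"
    using F1(3) F2(3) by (auto simp: d1_def d2_def)
  ultimately show ?thesis
    unfolding nonneg_span_def using F1 F2
    by (intro CollectI exI[of _ "F1 \<union> F2"] exI[of _ "\<lambda>v. d1 v + d2 v"]) auto
qed

lemma nonneg_span_subset_span: "nonneg_span S \<subseteq> span S"
proof
  fix x assume "x \<in> nonneg_span S"
  then obtain F c where F: "finite F" "F \<subseteq> S" "x = (\<Sum>v\<in>F. c v *\<^sub>R v)"
    unfolding nonneg_span_def by blast
  have "(\<Sum>v\<in>F. c v *\<^sub>R v) \<in> span S"
    by (rule span_sum, rule span_scale, rule span_base) (use F in auto)
  then show "x \<in> span S" using F by simp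
qed

lemma span_pair_iff: "x \<in> span {a, b} \<longleftrightarrow> (\<exists>c d. x = c *\<^sub>R a + d *\<^sub>R b)"
  by (auto simp: span_insert span_singleton algebra_simps)

lemma nonneg_span_pair:
  "x \<in> nonneg_span {a, b} \<longleftrightarrow> (\<exists>c d. 0 \<le> c \<and> 0 \<le> d \<and> x = c *\<^sub>R a + d *\<^sub>R b)"
proof
  assume "x \<in> nonneg_span {a, b}"
  then obtain F c where F: "F \<subseteq> {a, b}" "\<forall>v\<in>F. 0 \<le> c v" "x = (\<Sum>v\<in>F. c v *\<^sub>R v)"
    unfolding nonneg_span_def by blast
  define e where "e v = (if v \<in> F then c v else 0)" for v
  have x: "x = (\<Sum>v\<in>{a, b}. e v *\<^sub>R v)"
    unfolding F(3) by (rule sum.mono_neutral_cong_left) (auto simp: F(1) e_def)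
  have e: "0 \<le> e a" "0 \<le> e b"
    using F(2) by (auto simp: e_def)
  show "\<exists>c d. 0 \<le> c \<and> 0 \<le> d \<and> x = c *\<^sub>R a + d *\<^sub>R b"
  proof (cases "a = b")
    case True
    with x have "x = e a *\<^sub>R a + 0 *\<^sub>R b" by simp
    then show ?thesis using e by blast
  next
    case False
    with x have "x = e a *\<^sub>R a + e b *\<^sub>R b" by simp
    then show ?thesis using e by blast
  qed
next
  assume "\<exists>c d. 0 \<le> c \<and> 0 \<le> d \<and> x = c *\<^sub>R a + d *\<^sub>R b"
  then obtain c d where "0 \<le> c" "0 \<le> d" "x = c *\<^sub>R a + d *\<^sub>R b"
    by blast
  then show "x \<in> nonneg_span {a, b}"
    by (simp add: nonneg_span_add nonneg_span_scale nonneg_span_base)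
qed

lemma nonneg_span_singleton: "x \<in> nonneg_span {a} \<longleftrightarrow> (\<exists>c\<ge>0. x = c *\<^sub>R a)"
proof
  assume "x \<in> nonneg_span {a}"
  then obtain c d where "0 \<le> c" "0 \<le> d" "x = c *\<^sub>R a + d *\<^sub>R a"
    using nonneg_span_pair[of x a a] by auto
  then show "\<exists>c\<ge>0. x = c *\<^sub>R a"
    by (intro exI[of _ "c + d"]) (simp add: scaleR_add_left)
next
  assume "\<exists>c\<ge>0. x = c *\<^sub>R a"
  then show "x \<in> nonneg_span {a}"
    using nonneg_span_scale[OF nonneg_span_base[of a "{a}"]] by auto
qed

lemma nonneg_span_pair_subset:
  "a \<in> nonneg_span S \<Longrightarrow> b \<in> nonneg_span S \<Longrightarrow> nonneg_span {a, b} \<subseteq> nonneg_span S"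
  by (auto simp: nonneg_span_pair intro!: nonneg_span_add nonneg_span_scale)

lemma nonneg_span_pair_collinear:
  assumes "z \<in> nonneg_span {x, y}" "y \<in> span {x}"
  shows "z \<in> nonneg_span {x} \<union> nonneg_span {y}"
proof -
  obtain \<mu> where y: "y = \<mu> *\<^sub>R x"
    using assms(2) by (auto simp: span_singleton)
  obtain s t where st: "0 \<le> s" "0 \<le> t" "z = s *\<^sub>R x + t *\<^sub>R y"
    using assms(1) nonneg_span_pair by blast
  have z: "z = (s + t * \<mu>) *\<^sub>R x"
    using st(3) y by (simp add: algebra_simps)
  show ?thesis
  proof (cases "0 \<le> s + t * \<mu>")
    case True
    then show ?thesis using z by (auto simp: nonneg_span_singleton)
  next
    case False
    then have "\<mu> < 0"
      using st by (smt (verit) mult_nonneg_nonneg)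
    then have "z = ((s + t * \<mu>) / \<mu>) *\<^sub>R y" "0 \<le> (s + t * \<mu>) / \<mu>"
      using z y False by (auto simp: divide_nonpos_neg)
    then show ?thesis by (auto simp: nonneg_span_singleton)
  qed
qed

lemma nonneg_span_pair_on_line:
  assumes "z \<in> nonneg_span {x, y}" "z \<in> span {x}"
  shows "z \<in> nonneg_span {x} \<union> nonneg_span {y}"
proof -
  obtain s t where st: "0 \<le> s" "0 \<le> t" "z = s *\<^sub>R x + t *\<^sub>R y"
    using assms(1) nonneg_span_pair by blast
  show ?thesis
  proof (cases "t = 0")
    case True
    then show ?thesis using st by (auto simp: nonneg_span_singleton)
  next
    case False
    then have "y = (1 / t) *\<^sub>R (z - s *\<^sub>R x)"
      using st(3) by simp
    then have "y \<in> span {x}"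
      using assms(2) by (simp add: span_diff span_scale span_base)
    then show ?thesis by (rule nonneg_span_pair_collinear[OF assms(1)])
  qed
qed

lemma span_singleton_subset_nonneg_span_opposite:
  assumes "0 < \<mu>"
  shows "span {x} \<subseteq> nonneg_span {x, (- \<mu>) *\<^sub>R x}"
proof
  fix y assume "y \<in> span {x}"
  then obtain l where y: "y = l *\<^sub>R x" by (auto simp: span_singleton)
  show "y \<in> nonneg_span {x, (- \<mu>) *\<^sub>R x}"
  proof (cases "0 \<le> l")
    case True
    then show ?thesis unfolding nonneg_span_pair y by (intro exI[of _ l] exI[of _ 0]) auto
  next
    case False
    have "y = 0 *\<^sub>R x + (- l / \<mu>) *\<^sub>R ((- \<mu>) *\<^sub>R x)"
      using assms by (simp add: y field_simps)
    moreover have "0 \<le> - l / \<mu>"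
      using assms False by (simp add: divide_nonpos_pos)
    ultimately show ?thesis
      unfolding nonneg_span_pair by blast
  qed
qed

lemma closed_subD:
  "closed_sub Y B \<Longrightarrow> a \<in> B \<Longrightarrow> b \<in> B \<Longrightarrow> z \<in> nonneg_span {a, b} \<Longrightarrow> z \<in> Y \<Longrightarrow> z \<in> B"
  unfolding closed_sub_def by blast

lemma biclosed_sub_subset: "biclosed_sub Y B \<Longrightarrow> B \<subseteq> Y"
  unfolding biclosed_sub_def closed_sub_def by blast

lemma biclosed_sub_closed: "biclosed_sub Y B \<Longrightarrow> closed_sub Y B"
  unfolding biclosed_sub_def by blast

lemma biclosed_sub_closed_Diff: "biclosed_sub Y B \<Longrightarrow> closed_sub Y (Y - B)"
  unfolding biclosed_sub_def coclosed_sub_def by blast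

lemma biclosed_sub_Diff: "biclosed_sub Y B \<Longrightarrow> biclosed_sub Y (Y - B)"
  using biclosed_sub_subset[of Y B] double_diff[of B Y Y]
  unfolding biclosed_sub_def coclosed_sub_def by simp

lemma closed_sub_Int: "closed_sub Y B \<Longrightarrow> Z \<subseteq> Y \<Longrightarrow> closed_sub Z (B \<inter> Z)"
  unfolding closed_sub_def by blast

lemma biclosed_sub_Int:
  assumes "biclosed_sub Y B" "Z \<subseteq> Y"
  shows "biclosed_sub Z (B \<inter> Z)"
proof -
  have "closed_sub Z (B \<inter> Z)" "closed_sub Z ((Y - B) \<inter> Z)"
    using closed_sub_Int biclosed_sub_closed biclosed_sub_closed_Diff assms by blast+
  moreover have "(Y - B) \<inter> Z = Z - B \<inter> Z"
    using assms(2) by blast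
  ultimately show ?thesis
    unfolding biclosed_sub_def coclosed_sub_def by simp
qed

lemma biclosed_sub_zero:
  assumes "biclosed_sub Y B" "0 \<in> Y"
  shows "B = {} \<or> B = Y"
proof (rule ccontr)
  assume "\<not> (B = {} \<or> B = Y)"
  then obtain b n where "b \<in> B" "n \<in> Y - B"
    using biclosed_sub_subset[OF assms(1)] by blast
  then have "0 \<in> B" "0 \<in> Y - B"
    using closed_subD[OF biclosed_sub_closed[OF assms(1)], of b b 0]
      closed_subD[OF biclosed_sub_closed_Diff[OF assms(1)], of n n 0] assms(2)
    by (auto simp: zero_in_nonneg_span)
  then show False by blast
qed

lemma closed_sub_insert:
  "closed_sub Y B \<Longrightarrow> \<gamma> \<notin> Y \<Longrightarrow> \<forall>a\<in>B. \<forall>b\<in>B. \<gamma> \<notin> nonneg_span {a, b} \<Longrightarrow>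
    closed_sub (insert \<gamma> Y) B"
  unfolding closed_sub_def by blast

lemma closed_sub_insert_insert:
  assumes "closed_sub Y B" "\<forall>a\<in>insert \<gamma> B. \<forall>z\<in>nonneg_span {\<gamma>, a}. z \<in> Y \<longrightarrow> z \<in> B"
  shows "closed_sub (insert \<gamma> Y) (insert \<gamma> B)"
  unfolding closed_sub_def
proof (intro conjI ballI)
  show "insert \<gamma> B \<subseteq> insert \<gamma> Y"
    using assms(1) unfolding closed_sub_def by blast
next
  fix a b z assume ab: "a \<in> insert \<gamma> B" "b \<in> insert \<gamma> B"
    and z: "z \<in> nonneg_span {a, b} \<inter> insert \<gamma> Y"
  show "z \<in> insert \<gamma> B"
  proof (cases "z = \<gamma>")
    case False
    then have zY: "z \<in> Y" using z by blast
    consider "a = \<gamma>" | "b = \<gamma>" | "a \<in> B" "b \<in> B"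
      using ab by blast
    then show ?thesis
    proof cases
      case 1
      then show ?thesis using assms(2) ab z zY by blast
    next
      case 2
      then have "z \<in> nonneg_span {\<gamma>, a}" using z by (simp add: insert_commute)
      then show ?thesis using assms(2) ab zY by blast
    next
      case 3
      then show ?thesis using z zY closed_subD[OF assms(1)] by blast
    qed
  qed simp
qed

lemma closure_in_subset_closed: "closed_sub X C \<Longrightarrow> U \<subseteq> C \<Longrightarrow> closure_in X U \<subseteq> C"
  unfolding closure_in_def closed_sub_def by blast

lemma closure_in_superset: "U \<subseteq> closure_in X U"
  unfolding closure_in_def by blast

lemma closure_in_mono: "U \<subseteq> V \<Longrightarrow> closure_in X U \<subseteq> closure_in X V"
  unfolding closure_in_def by blast

lemma closure_in_Int_subset_if_zero_in:
  assumes "biclosed_sub Y U" "0 \<in> Y"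
  shows "closure_in X U \<inter> Y \<subseteq> U"
proof -
  have "closed_sub X {}"
    unfolding closed_sub_def by simp
  then show ?thesis
    using biclosed_sub_zero[OF assms] closure_in_subset_closed[of X "{}" U] by blast
qed

definition clean_triples :: "'a::real_vector set \<Rightarrow> 'a set \<Rightarrow> bool" where
  "clean_triples X Y \<longleftrightarrow>
     (\<forall>a\<in>Y. \<forall>b\<in>Y. \<forall>c\<in>Y. \<exists>F. full X F \<and> a \<in> F \<and> b \<in> F \<and> c \<in> F \<and> clean (F \<inter> Y))"

lemma clean_triplesE:
  assumes "clean_triples X Y" "a \<in> Y" "b \<in> Y" "c \<in> Y"
  obtains F where "full X F" "a \<in> F" "b \<in> F" "c \<in> F" "clean (F \<inter> Y)"
  using assms unfolding clean_triples_def by blast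

lemma full_memI:
  "full X F \<Longrightarrow> a \<in> F \<Longrightarrow> b \<in> F \<Longrightarrow> z \<in> X \<Longrightarrow> z \<in> span {a, b} \<Longrightarrow> z \<in> F"
  unfolding full_def by blast

lemma full_nonneg_span_pair:
  assumes "full X F" "a \<in> F" "z \<in> F" "b \<in> X" "z \<in> nonneg_span {a, b}" "a \<in> S" "b \<in> S"
  shows "z \<in> nonneg_span (S \<inter> F)"
proof -
  obtain c d where cd: "0 \<le> c" "0 \<le> d" "z = c *\<^sub>R a + d *\<^sub>R b"
    using assms(5) nonneg_span_pair by blast
  show ?thesis
  proof (cases "d = 0")
    case True
    have "a \<in> S \<inter> F"
      using assms(2,6) by blast
    then show ?thesis
      using cd True nonneg_span_scale[OF nonneg_span_base, of a "S \<inter> F" c] by simp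
  next
    case False
    have "b = (1 / d) *\<^sub>R z + (- c / d) *\<^sub>R a"
      using cd False by (simp add: algebra_simps)
    then have "b \<in> F"
      using full_memI[OF assms(1,3,2,4)] span_pair_iff by blast
    then have "{a, b} \<subseteq> S \<inter> F"
      using assms(2,6,7) by blast
    then show ?thesis
      using assms(5) nonneg_span_mono by blast
  qed
qed

lemma cleanD: "clean Y \<Longrightarrow> biclosed_sub Y B \<Longrightarrow> weakly_separable Y B"
  unfolding clean_def using biclosed_sub_subset by blast

lemma clean_Int_separates:
  assumes "clean (F \<inter> Y)" "biclosed_sub Y B"
    "z \<in> nonneg_span (B \<inter> F)" "z \<in> nonneg_span ((Y - B) \<inter> F)"
  shows "z = 0"
proof -
  have "biclosed_sub (F \<inter> Y) (B \<inter> (F \<inter> Y))"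
    using assms(2) by (rule biclosed_sub_Int) blast
  then have "weakly_separable (F \<inter> Y) (B \<inter> (F \<inter> Y))"
    by (rule cleanD[OF assms(1)])
  moreover have "B \<inter> (F \<inter> Y) = B \<inter> F" "F \<inter> Y - B \<inter> (F \<inter> Y) = (Y - B) \<inter> F"
    using biclosed_sub_subset[OF assms(2)] by blast+
  ultimately have "nonneg_span (B \<inter> F) \<inter> nonneg_span ((Y - B) \<inter> F) = {0}"
    unfolding weakly_separable_def by simp
  then show ?thesis
    using assms(3,4) by blast
qed

definition has_fundamental_pairs :: "'a::euclidean_space set \<Rightarrow> bool" where
  "has_fundamental_pairs X \<longleftrightarrow> (\<forall>Y. two_dim_linear_subset X Y \<longrightarrow> (\<exists>\<alpha> \<beta>. fundamental Y \<alpha> \<beta>))"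

lemma two_dim_linear_subset_subset: "two_dim_linear_subset X Y \<Longrightarrow> Y \<subseteq> X"
  unfolding two_dim_linear_subset_def linear_subset_def by blast

lemma two_dim_linear_subset_zero: "two_dim_linear_subset X Y \<Longrightarrow> 0 \<in> X \<Longrightarrow> 0 \<in> Y"
  unfolding two_dim_linear_subset_def linear_subset_def by (auto simp: subspace_0)

lemma two_dim_linear_subset_pair:
  assumes "v \<in> X" "w \<in> X" "v \<noteq> 0" "w \<notin> span {v}"
  shows "two_dim_linear_subset X (X \<inter> span {v, w})"
proof -
  have "independent {v}"
    using assms(3) by (simp add: independent_insert)
  then have "independent (insert w {v})"
    by (rule independent_insertI[OF assms(4)])
  moreover have "insert w {v} = {v, w}"
    by blast
  ultimately have ind: "independent {v, w}"
    by simp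
  have card: "card {v, w} = 2"
    using assms(4) span_base[of v "{v}"] by (cases "w = v") auto
  have "dim (X \<inter> span {v, w}) \<le> card {v, w}"
    by (intro dim_le_card) auto
  moreover have "dim {v, w} \<le> dim (X \<inter> span {v, w})"
    using assms(1,2) by (intro dim_subset) (auto simp: span_base)
  moreover have "dim {v, w} = card {v, w}"
    by (rule dim_eq_card_independent[OF ind])
  moreover have "linear_subset X (X \<inter> span {v, w})"
    unfolding linear_subset_def by (blast intro: subspace_span)
  ultimately show ?thesis
    unfolding two_dim_linear_subset_def using card by linarith
qed

lemma fundamental_commute: "fundamental Y \<alpha> \<beta> \<Longrightarrow> fundamental Y \<beta> \<alpha>"
  unfolding fundamental_def by (auto simp: insert_commute)

lemma fundamental_nonzero: "fundamental Y \<alpha> \<beta> \<Longrightarrow> \<alpha> \<noteq> 0"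
  unfolding fundamental_def using zero_in_nonneg_span by metis

lemma fundamental_not_collinear:
  assumes "two_dim_linear_subset X Y" "fundamental Y \<alpha> \<beta>"
  shows "\<alpha> \<notin> span {\<beta>}"
proof
  assume "\<alpha> \<in> span {\<beta>}"
  then have "span {\<alpha>, \<beta>} = span {\<beta>}"
    by (rule span_redundant)
  moreover have "Y \<subseteq> span {\<alpha>, \<beta>}"
    using assms(2) nonneg_span_subset_span unfolding fundamental_def by blast
  ultimately have "dim Y \<le> card {\<beta>}"
    by (intro dim_le_card) auto
  then show False
    using assms(1) unfolding two_dim_linear_subset_def by simp
qed

lemma not_collinear_coeffs_zero:
  assumes "\<alpha> \<notin> span {\<beta>}" "\<beta> \<notin> span {\<alpha>}" "a *\<^sub>R \<alpha> + b *\<^sub>R \<beta> = 0"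
  shows "a = 0 \<and> b = 0"
proof -
  have "a = 0" if "\<alpha> \<notin> span {\<beta>}" "a *\<^sub>R \<alpha> + b *\<^sub>R \<beta> = 0" for a b \<alpha> \<beta>
  proof (rule ccontr)
    assume "a \<noteq> 0"
    have "a *\<^sub>R \<alpha> = (- b) *\<^sub>R \<beta>"
      using that(2) by (simp add: eq_neg_iff_add_eq_0)
    then have "\<alpha> = (- b / a) *\<^sub>R \<beta>"
      using \<open>a \<noteq> 0\<close> by (metis divide_inverse_commute scaleR_scaleR scaleR_one
          right_inverse mult.commute)
    then show False
      using that(1) span_scale[OF span_base, of \<beta> "{\<beta>}" "- b / a"] by simp
  qed
  then show ?thesis
    using assms by (metis add.commute)
qed

lemma fundamental_pointed:
  assumes "two_dim_linear_subset X Y" "fundamental Y \<alpha> \<beta>"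
    "v \<in> Y" "(- \<mu>) *\<^sub>R v \<in> Y" "0 < \<mu>"
  shows "v = 0"
proof -
  have cone: "Y \<subseteq> nonneg_span {\<alpha>, \<beta>}"
    using assms(2) unfolding fundamental_def by blast
  obtain a b where ab: "0 \<le> a" "0 \<le> b" "v = a *\<^sub>R \<alpha> + b *\<^sub>R \<beta>"
    using cone assms(3) nonneg_span_pair by blast
  obtain c d where cd: "0 \<le> c" "0 \<le> d" "(- \<mu>) *\<^sub>R v = c *\<^sub>R \<alpha> + d *\<^sub>R \<beta>"
    using cone assms(4) nonneg_span_pair by blast
  have "(c + \<mu> * a) *\<^sub>R \<alpha> + (d + \<mu> * b) *\<^sub>R \<beta> = (c *\<^sub>R \<alpha> + d *\<^sub>R \<beta>) + \<mu> *\<^sub>R v"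
    unfolding ab(3) by (simp add: algebra_simps)
  also have "\<dots> = 0"
    unfolding cd(3)[symmetric] by simp
  finally have "(c + \<mu> * a) *\<^sub>R \<alpha> + (d + \<mu> * b) *\<^sub>R \<beta> = 0" .
  then have "c + \<mu> * a = 0 \<and> d + \<mu> * b = 0"
    using not_collinear_coeffs_zero fundamental_not_collinear[OF assms(1)]
      assms(2) fundamental_commute by blast
  then have "a = 0" "b = 0"
    using ab cd assms(5) by (smt (verit) mult_pos_pos zero_less_mult_iff)+
  then show ?thesis
    using ab(3) by simp
qed

lemma has_fundamental_pairs_no_opposite:
  assumes "has_fundamental_pairs X" "v \<in> X" "w \<in> X" "v \<noteq> 0" "w \<notin> span {v}" "0 < \<mu>"
  shows "(- \<mu>) *\<^sub>R v \<notin> X"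
proof
  assume opp: "(- \<mu>) *\<^sub>R v \<in> X"
  let ?Y = "X \<inter> span {v, w}"
  have Y: "two_dim_linear_subset X ?Y"
    using assms(2-5) by (rule two_dim_linear_subset_pair)
  then obtain \<alpha> \<beta> where "fundamental ?Y \<alpha> \<beta>"
    using assms(1) unfolding has_fundamental_pairs_def by blast
  moreover have "v \<in> ?Y" "(- \<mu>) *\<^sub>R v \<in> ?Y"
    using assms(2) opp span_scale[OF span_base, of v "{v, w}" "- \<mu>"] by (auto intro: span_base)
  ultimately show False
    using fundamental_pointed[OF Y] assms(4,6) by blast
qed

lemma closed_sub_opposite_pair:
  assumes "has_fundamental_pairs X" "Y \<subseteq> X" "closed_sub Y N"
    "a \<in> N" "a \<noteq> 0" "(- \<mu>) *\<^sub>R a \<in> N" "0 < \<mu>"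
  shows "Y \<subseteq> N"
proof
  fix y assume "y \<in> Y"
  have "(- \<mu>) *\<^sub>R a \<in> X"
    using assms(2,3,6) unfolding closed_sub_def by blast
  then have "y \<in> span {a}"
    using has_fundamental_pairs_no_opposite[OF assms(1) _ _ assms(5) _ assms(7)]
      assms(2-4) \<open>y \<in> Y\<close> unfolding closed_sub_def by blast
  then have "y \<in> nonneg_span {a, (- \<mu>) *\<^sub>R a}"
    using span_singleton_subset_nonneg_span_opposite[OF assms(7)] by blast
  then show "y \<in> N"
    using closed_subD[OF assms(3,4,6)] \<open>y \<in> Y\<close> by blast
qed

lemma fundamental_coeff_nonzero:
  assumes "fundamental Y \<alpha> \<beta>" "\<gamma> \<in> Y" "\<gamma> \<noteq> \<beta>" "\<gamma> \<noteq> 0"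
    "\<gamma> = s *\<^sub>R \<alpha> + t *\<^sub>R \<beta>" "0 \<le> t"
  shows "s \<noteq> 0"
proof
  assume "s = 0"
  then have "t \<noteq> 0" "\<gamma> = t *\<^sub>R \<beta>"
    using assms(4,5) by auto
  then have "\<beta> = (1 / t) *\<^sub>R \<gamma>" "0 \<le> 1 / t"
    using assms(6) by auto
  moreover have "\<gamma> \<in> nonneg_span (Y - {\<beta>})"
    using assms(2,3) by (auto intro: nonneg_span_base)
  ultimately have "\<beta> \<in> nonneg_span (Y - {\<beta>})"
    using nonneg_span_scale by metis
  then show False
    using assms(1) unfolding fundamental_def by blast
qed

lemma pair_cone_closed:
  assumes "clean_triples X Y" "Y \<subseteq> X" "0 \<notin> Y" "biclosed_sub Y B" "\<gamma> \<in> X"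
    "b1 \<in> B" "b2 \<in> B" "\<gamma> \<in> nonneg_span {b1, b2}"
    "a \<in> insert \<gamma> B" "z \<in> nonneg_span {\<gamma>, a}" "z \<in> Y"
  shows "z \<in> B"
proof (rule ccontr)
  assume "z \<notin> B"
  have BY: "B \<subseteq> Y"
    using assms(4) by (rule biclosed_sub_subset)
  define a' where "a' = (if a = \<gamma> then b1 else a)"
  have "a' \<in> Y"
    using assms(6,9) BY unfolding a'_def by auto
  then obtain F where F: "full X F" "b1 \<in> F" "b2 \<in> F" "a' \<in> F" "clean (F \<inter> Y)"
    using clean_triplesE[OF assms(1)] assms(6,7) BY by blast
  have "\<gamma> \<in> F"
    using full_memI[OF F(1-3) assms(5)] assms(8) nonneg_span_subset_span by blast
  have "a \<in> F"
    using F(4) \<open>\<gamma> \<in> F\<close> unfolding a'_def by (auto split: if_splits)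
  have "z \<in> F"
    using full_memI[OF F(1) \<open>\<gamma> \<in> F\<close> \<open>a \<in> F\<close>] assms(2,10,11) nonneg_span_subset_span by blast
  have "\<gamma> \<in> nonneg_span (B \<inter> F)"
    using assms(6-8) F(2,3) nonneg_span_mono[of "{b1, b2}" "B \<inter> F"] by blast
  moreover have "a \<in> nonneg_span (B \<inter> F)"
    using assms(9) \<open>a \<in> F\<close> calculation nonneg_span_base[of a "B \<inter> F"] by auto
  ultimately have "z \<in> nonneg_span (B \<inter> F)"
    using assms(10) nonneg_span_pair_subset by blast
  moreover have "z \<in> nonneg_span ((Y - B) \<inter> F)"
    using assms(11) \<open>z \<notin> B\<close> \<open>z \<in> F\<close> by (intro nonneg_span_base) blast
  ultimately have "z = 0"
    by (rule clean_Int_separates[OF F(5) assms(4)])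
  then show False
    using assms(3,11) by simp
qed

lemma closed_sub_insert_either_side:
  assumes "clean_triples X Y" "Y \<subseteq> X" "biclosed_sub Y B" "\<gamma> \<in> X" "\<gamma> \<notin> Y" "\<gamma> \<noteq> 0"
  shows "closed_sub (insert \<gamma> Y) B \<or> closed_sub (insert \<gamma> Y) (Y - B)"
proof (rule ccontr)
  assume "\<not> ?thesis"
  then obtain b1 b2 n1 n2 where b: "b1 \<in> B" "b2 \<in> B" "\<gamma> \<in> nonneg_span {b1, b2}"
    and n: "n1 \<in> Y - B" "n2 \<in> Y - B" "\<gamma> \<in> nonneg_span {n1, n2}"
    using closed_sub_insert[OF biclosed_sub_closed[OF assms(3)] assms(5)]
      closed_sub_insert[OF biclosed_sub_closed_Diff[OF assms(3)] assms(5)] by blast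
  obtain F where F: "full X F" "b1 \<in> F" "b2 \<in> F" "n1 \<in> F" "clean (F \<inter> Y)"
    using clean_triplesE[OF assms(1)] b(1,2) n(1) biclosed_sub_subset[OF assms(3)] by blast
  have "\<gamma> \<in> F"
    using full_memI[OF F(1-3) assms(4)] b(3) nonneg_span_subset_span by blast
  have "\<gamma> \<in> nonneg_span (B \<inter> F)"
    using b F(2,3) nonneg_span_mono[of "{b1, b2}" "B \<inter> F"] by blast
  moreover have "\<gamma> \<in> nonneg_span ((Y - B) \<inter> F)"
    by (rule full_nonneg_span_pair[OF F(1,4) \<open>\<gamma> \<in> F\<close> _ n(3) n(1,2)]) (use n assms(2) in blast)
  ultimately have "\<gamma> = 0"
    by (rule clean_Int_separates[OF F(5) assms(3)])
  then show False
    using assms(6) by simp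
qed

lemma closed_sub_insert_join_or_not:
  assumes "clean_triples X Y" "Y \<subseteq> X" "0 \<notin> Y" "biclosed_sub Y B" "\<gamma> \<in> X" "\<gamma> \<notin> Y"
  shows "closed_sub (insert \<gamma> Y) B \<or> closed_sub (insert \<gamma> Y) (insert \<gamma> B)"
proof (cases "closed_sub (insert \<gamma> Y) B")
  case False
  then obtain b1 b2 where b: "b1 \<in> B" "b2 \<in> B" "\<gamma> \<in> nonneg_span {b1, b2}"
    using closed_sub_insert[OF biclosed_sub_closed[OF assms(4)] assms(6)] by blast
  have "\<forall>a\<in>insert \<gamma> B. \<forall>z\<in>nonneg_span {\<gamma>, a}. z \<in> Y \<longrightarrow> z \<in> B"
    using pair_cone_closed[OF assms(1-5) b] by blast
  then have "closed_sub (insert \<gamma> Y) (insert \<gamma> B)"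
    by (rule closed_sub_insert_insert[OF biclosed_sub_closed[OF assms(4)]])
  then show ?thesis ..
qed simp

lemma closed_sub_join_ray:
  assumes "closed_sub Y B" "z \<in> B" "\<gamma> \<in> nonneg_span {z}"
    "a \<in> insert \<gamma> B" "x \<in> nonneg_span {\<gamma>, a}" "x \<in> Y"
  shows "x \<in> B"
proof -
  define a' where "a' = (if a = \<gamma> then z else a)"
  have "a' \<in> B"
    using assms(2,4) unfolding a'_def by auto
  have "\<gamma> \<in> nonneg_span {z, a'}"
    using assms(3) nonneg_span_mono[of "{z}" "{z, a'}"] by blast
  moreover have "a \<in> nonneg_span {z, a'}"
    using calculation nonneg_span_base[of a "{z, a'}"] unfolding a'_def by (auto split: if_splits)
  ultimately have "x \<in> nonneg_span {z, a'}"
    using assms(5) nonneg_span_pair_subset by blast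
  then show ?thesis
    using closed_subD[OF assms(1,2) \<open>a' \<in> B\<close>] assms(6) by blast
qed

lemma nonneg_span_pair_escape:
  assumes "closed_sub Y N" "0 \<notin> Y" "z \<in> Y" "z \<notin> N" "a \<in> insert \<gamma> N" "z \<in> nonneg_span {\<gamma>, a}"
  shows "\<gamma> \<in> nonneg_span {z} \<or> (a \<in> N \<and> (\<exists>c>0. \<exists>d>0. z = c *\<^sub>R \<gamma> + d *\<^sub>R a))"
proof -
  obtain c d where cd: "0 \<le> c" "0 \<le> d" "z = c *\<^sub>R \<gamma> + d *\<^sub>R a"
    using assms(6) nonneg_span_pair by blast
  have "z \<noteq> 0"
    using assms(2,3) by auto
  show ?thesis
  proof (cases "a = \<gamma> \<or> d = 0")
    case True
    then obtain e where e: "0 \<le> e" "z = e *\<^sub>R \<gamma>"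
      using cd by (metis add.right_neutral add_nonneg_nonneg scaleR_add_left scaleR_zero_left)
    then have "\<gamma> = (1 / e) *\<^sub>R z" "0 \<le> 1 / e"
      using \<open>z \<noteq> 0\<close> by auto
    then show ?thesis
      unfolding nonneg_span_singleton by blast
  next
    case False
    then have "a \<in> N" "0 < d"
      using assms(5) cd(2) by auto
    have "c \<noteq> 0"
    proof
      assume "c = 0"
      then have "z \<in> nonneg_span {a}"
        using cd unfolding nonneg_span_singleton by auto
      then show False
        using closed_subD[OF assms(1) \<open>a \<in> N\<close> \<open>a \<in> N\<close>, of z] assms(3,4) by simp
    qed
    then have "0 < c"
      using cd(1) by simp
    then show ?thesis
      using \<open>a \<in> N\<close> \<open>0 < d\<close> cd(3) by blast
  qed
qed

lemma opposite_escapes_impossible: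
  assumes "has_fundamental_pairs X" "clean_triples X Y" "Y \<subseteq> X" "0 \<notin> Y" "biclosed_sub Y B" "\<gamma> \<in> X"
    and a1: "a1 \<in> Y - B" and z1: "z1 \<in> B" "z1 = c1 *\<^sub>R \<gamma> + d1 *\<^sub>R a1" "0 < c1" "0 < d1"
    and a2: "a2 \<in> B" and z2: "z2 \<in> Y - B" "z2 = c2 *\<^sub>R \<gamma> + d2 *\<^sub>R a2" "0 < c2" "0 < d2"
  shows False
proof -
  have "a2 \<in> Y" "z1 \<in> Y"
    using a2 z1(1) biclosed_sub_subset[OF assms(5)] by blast+
  then obtain F where F: "full X F" "z1 \<in> F" "a1 \<in> F" "a2 \<in> F" "clean (F \<inter> Y)"
    using clean_triplesE[OF assms(2)] a1 by blast
  have "\<gamma> = (1 / c1) *\<^sub>R z1 + (- d1 / c1) *\<^sub>R a1"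
    using z1(2,3) by (simp add: algebra_simps)
  then have "\<gamma> \<in> F"
    using full_memI[OF F(1-3) assms(6)] span_pair_iff by blast
  have "z2 \<in> F"
    using full_memI[OF F(1) \<open>\<gamma> \<in> F\<close> F(4)] z2(1,2) assms(3) span_pair_iff by blast
  \<comment> \<open>eliminating \<gamma> from the two decompositions gives a vector in both cones\<close>
  have "c2 *\<^sub>R z1 + (c1 * d2) *\<^sub>R a2 = c1 *\<^sub>R z2 + (c2 * d1) *\<^sub>R a1"
    unfolding z1(2) z2(2) by (simp add: algebra_simps)
  moreover have "c2 *\<^sub>R z1 + (c1 * d2) *\<^sub>R a2 \<in> nonneg_span (B \<inter> F)"
    using z1 z2 a2 F by (intro nonneg_span_add nonneg_span_scale nonneg_span_base) auto
  moreover have "c1 *\<^sub>R z2 + (c2 * d1) *\<^sub>R a1 \<in> nonneg_span ((Y - B) \<inter> F)"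
    using z1 z2 a1 F \<open>z2 \<in> F\<close> by (intro nonneg_span_add nonneg_span_scale nonneg_span_base) auto
  ultimately have "c1 *\<^sub>R z2 + (c2 * d1) *\<^sub>R a1 = 0"
    using clean_Int_separates[OF F(5) assms(5)] by metis
  then have "c1 *\<^sub>R z2 = - ((c2 * d1) *\<^sub>R a1)"
    by (simp add: eq_neg_iff_add_eq_0)
  have "z2 = (1 / c1) *\<^sub>R (c1 *\<^sub>R z2)"
    using z1(3) by simp
  also have "\<dots> = (- (c2 * d1 / c1)) *\<^sub>R a1"
    unfolding \<open>c1 *\<^sub>R z2 = _\<close> by simp
  finally have opp: "z2 = (- (c2 * d1 / c1)) *\<^sub>R a1" .
  have "0 < c2 * d1 / c1" "a1 \<noteq> 0"
    using z1 z2 a1 assms(4) by auto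
  then have "Y \<subseteq> Y - B"
    using closed_sub_opposite_pair[OF assms(1,3) biclosed_sub_closed_Diff[OF assms(5)] a1]
      z2(1) opp by simp
  then show False
    using a2 \<open>a2 \<in> Y\<close> by blast
qed

lemma closed_sub_insert_join_either_side:
  assumes "has_fundamental_pairs X" "clean_triples X Y" "Y \<subseteq> X" "0 \<notin> Y" "biclosed_sub Y B" "\<gamma> \<in> X"
  shows "closed_sub (insert \<gamma> Y) (insert \<gamma> B) \<or> closed_sub (insert \<gamma> Y) (insert \<gamma> (Y - B))"
proof (rule ccontr)
  have clB: "closed_sub Y B" and clN: "closed_sub Y (Y - B)"
    using assms(5) biclosed_sub_closed biclosed_sub_closed_Diff by blast+
  assume "\<not> ?thesis"
  then obtain a1 z1 a2 z2 where
    a1: "a1 \<in> insert \<gamma> (Y - B)" and z1: "z1 \<in> nonneg_span {\<gamma>, a1}" "z1 \<in> Y" "z1 \<notin> Y - B" and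
    a2: "a2 \<in> insert \<gamma> B" and z2: "z2 \<in> nonneg_span {\<gamma>, a2}" "z2 \<in> Y" "z2 \<notin> B"
    using closed_sub_insert_insert[OF clB] closed_sub_insert_insert[OF clN] by blast
  have "\<gamma> \<notin> nonneg_span {z1}"
    using closed_sub_join_ray[OF clB _ _ a2 z2(1,2)] z1(2,3) z2(3) by blast
  moreover have "\<gamma> \<notin> nonneg_span {z2}"
    using closed_sub_join_ray[OF clN _ _ a1 z1(1,2)] z1(3) z2(2,3) by blast
  ultimately obtain c1 d1 c2 d2 where
    "a1 \<in> Y - B" "0 < c1" "0 < d1" "z1 = c1 *\<^sub>R \<gamma> + d1 *\<^sub>R a1" and
    "a2 \<in> B" "0 < c2" "0 < d2" "z2 = c2 *\<^sub>R \<gamma> + d2 *\<^sub>R a2"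
    using nonneg_span_pair_escape[OF clN assms(4) z1(2,3) a1 z1(1)]
      nonneg_span_pair_escape[OF clB assms(4) z2(2,3) a2 z2(1)] by blast
  then show False
    using opposite_escapes_impossible[OF assms] z1(2,3) z2(2,3) by blast
qed

lemma biclosed_sub_insert:
  assumes "has_fundamental_pairs X" "clean_triples X Y" "Y \<subseteq> X" "0 \<notin> Y" "biclosed_sub Y B"
    "\<gamma> \<in> X" "\<gamma> \<notin> Y" "\<gamma> \<noteq> 0"
  shows "biclosed_sub (insert \<gamma> Y) B \<or> biclosed_sub (insert \<gamma> Y) (insert \<gamma> B)"
proof -
  let ?Y = "insert \<gamma> Y" and ?N = "Y - B"
  have BY: "B \<subseteq> Y"
    using assms(5) by (rule biclosed_sub_subset)
  then have "?Y - B = insert \<gamma> ?N" "?Y - insert \<gamma> B = ?N"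
    using assms(7) by blast+
  then have biclosed_iff:
    "biclosed_sub ?Y B \<longleftrightarrow> closed_sub ?Y B \<and> closed_sub ?Y (insert \<gamma> ?N)"
    "biclosed_sub ?Y (insert \<gamma> B) \<longleftrightarrow> closed_sub ?Y (insert \<gamma> B) \<and> closed_sub ?Y ?N"
    unfolding biclosed_sub_def coclosed_sub_def using BY by auto
  have "closed_sub ?Y B \<or> closed_sub ?Y ?N"
    using closed_sub_insert_either_side[OF assms(2,3,5,6,7,8)] .
  moreover have "closed_sub ?Y B \<or> closed_sub ?Y (insert \<gamma> B)"
    using closed_sub_insert_join_or_not[OF assms(2-7)] .
  moreover have "closed_sub ?Y ?N \<or> closed_sub ?Y (insert \<gamma> ?N)"
    using closed_sub_insert_join_or_not[OF assms(2-4) biclosed_sub_Diff[OF assms(5)] assms(6,7)] .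
  moreover have "closed_sub ?Y (insert \<gamma> B) \<or> closed_sub ?Y (insert \<gamma> ?N)"
    using closed_sub_insert_join_either_side[OF assms(1-6)] .
  ultimately show ?thesis
    unfolding biclosed_iff by blast
qed

lemma closure_in_Int_subset_if_clean:
  assumes "clean Y" "Y \<subseteq> X" "0 \<notin> Y" "biclosed_sub Y B"
  shows "closure_in X B \<inter> Y \<subseteq> B"
proof -
  let ?C = "X \<inter> nonneg_span B"
  have "closed_sub X ?C"
    unfolding closed_sub_def using nonneg_span_pair_subset by blast
  moreover have "B \<subseteq> ?C"
    using biclosed_sub_subset[OF assms(4)] assms(2) nonneg_span_base by blast
  moreover have "?C \<inter> Y \<subseteq> B"
  proof
    fix y assume y: "y \<in> ?C \<inter> Y"
    show "y \<in> B"
    proof (rule ccontr)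
      assume "y \<notin> B"
      then have "y \<in> nonneg_span (Y - B)"
        using y by (intro nonneg_span_base) blast
      then have "y = 0"
        using y cleanD[OF assms(1,4)] unfolding weakly_separable_def by blast
      then show False
        using y assms(3) by blast
    qed
  qed
  ultimately show ?thesis
    using closure_in_subset_closed by blast
qed

definition pair_cone_completion :: "'a::real_vector set \<Rightarrow> 'a set \<Rightarrow> 'a set \<Rightarrow> 'a set" where
  "pair_cone_completion X Y B = B \<union> {z \<in> X - Y. \<exists>b1\<in>B. \<exists>b2\<in>B. z \<in> nonneg_span {b1, b2}}"

lemma pair_cone_completion_memI:
  assumes "closed_sub Y B" "z \<in> X" "b1 \<in> B" "b2 \<in> B" "z \<in> nonneg_span {b1, b2}"
  shows "z \<in> pair_cone_completion X Y B"
  using assms closed_subD[OF assms(1)] unfolding pair_cone_completion_def by blast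

lemma pair_cone_completion_ray:
  assumes "closed_sub Y B" "x \<in> pair_cone_completion X Y B" "z \<in> X" "z \<in> nonneg_span {x}"
  shows "z \<in> pair_cone_completion X Y B"
proof -
  have "\<exists>b1\<in>B. \<exists>b2\<in>B. x \<in> nonneg_span {b1, b2}"
  proof (cases "x \<in> B")
    case True
    then show ?thesis
      by (intro bexI[of _ x]) (auto intro: nonneg_span_base)
  next
    case False
    then show ?thesis
      using assms(2) unfolding pair_cone_completion_def by blast
  qed
  then obtain b1 b2 where b: "b1 \<in> B" "b2 \<in> B" "x \<in> nonneg_span {b1, b2}"
    by blast
  then have "z \<in> nonneg_span {b1, b2}"
    using assms(4) nonneg_span_pair_subset[of x "{b1, b2}" x] by auto
  then show ?thesis
    using pair_cone_completion_memI[OF assms(1,3) b(1,2)] by blast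
qed

lemma pair_cone_completion_outside:
  assumes "clean_triples X Y" "Y \<subseteq> X" "0 \<notin> Y" "biclosed_sub Y B"
    and collinear: "\<And>v w. v \<in> X - Y \<Longrightarrow> w \<in> X - Y \<Longrightarrow> v \<noteq> 0 \<Longrightarrow> w \<in> span {v}"
    and x: "x \<in> pair_cone_completion X Y B - B" and y: "y \<in> pair_cone_completion X Y B"
    and z: "z \<in> X" "z \<in> nonneg_span {x, y}"
  shows "z \<in> pair_cone_completion X Y B"
proof (cases "z \<in> nonneg_span {x} \<union> nonneg_span {y}")
  case True
  then show ?thesis
    using pair_cone_completion_ray[OF biclosed_sub_closed[OF assms(4)]] x y z(1) by blast
next
  case False
  obtain b1 b2 where x': "x \<in> X - Y" "b1 \<in> B" "b2 \<in> B" "x \<in> nonneg_span {b1, b2}"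
    using x unfolding pair_cone_completion_def by blast
  have "x \<noteq> 0"
    using False z(2) nonneg_span_pair_collinear[of z y x] by (auto simp: insert_commute span_zero)
  have "y \<notin> X - Y"
    using collinear[OF x'(1) _ \<open>x \<noteq> 0\<close>] nonneg_span_pair_collinear[OF z(2)] False by blast
  then have "y \<in> B"
    using y unfolding pair_cone_completion_def by blast
  have "z \<in> Y"
    using collinear[OF x'(1) _ \<open>x \<noteq> 0\<close>] nonneg_span_pair_on_line[OF z(2)] z(1) False by blast
  then have "z \<in> B"
    using pair_cone_closed[OF assms(1-4) _ x'(2-4) _ z(2)] x'(1) \<open>y \<in> B\<close> by blast
  then show ?thesis
    unfolding pair_cone_completion_def by blast
qed

lemma closed_sub_pair_cone_completion:
  assumes "clean_triples X Y" "Y \<subseteq> X" "0 \<notin> Y" "biclosed_sub Y B"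
    and "\<And>v w. v \<in> X - Y \<Longrightarrow> w \<in> X - Y \<Longrightarrow> v \<noteq> 0 \<Longrightarrow> w \<in> span {v}"
  shows "closed_sub X (pair_cone_completion X Y B)"
  unfolding closed_sub_def
proof (intro conjI ballI)
  show "pair_cone_completion X Y B \<subseteq> X"
    using biclosed_sub_subset[OF assms(4)] assms(2) unfolding pair_cone_completion_def by blast
next
  fix x y z assume xy: "x \<in> pair_cone_completion X Y B" "y \<in> pair_cone_completion X Y B"
    and z: "z \<in> nonneg_span {x, y} \<inter> X"
  then consider "x \<in> B" "y \<in> B" | "x \<in> pair_cone_completion X Y B - B"
    | "y \<in> pair_cone_completion X Y B - B"
    by blast
  then show "z \<in> pair_cone_completion X Y B"
  proof cases
    case 1
    then show ?thesis
      using pair_cone_completion_memI[OF biclosed_sub_closed[OF assms(4)]] z by blast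
  next
    case 2
    then show ?thesis
      using pair_cone_completion_outside[OF assms] xy z by blast
  next
    case 3
    then show ?thesis
      using pair_cone_completion_outside[OF assms, of y x z] xy z by (simp add: insert_commute)
  qed
qed

lemma closure_in_Int_subset_if_collinear_outside:
  assumes "clean_triples X Y" "Y \<subseteq> X" "0 \<notin> Y" "biclosed_sub Y B"
    and "\<And>v w. v \<in> X - Y \<Longrightarrow> w \<in> X - Y \<Longrightarrow> v \<noteq> 0 \<Longrightarrow> w \<in> span {v}"
  shows "closure_in X B \<inter> Y \<subseteq> B"
proof -
  have "closure_in X B \<subseteq> pair_cone_completion X Y B"
    by (rule closure_in_subset_closed[OF closed_sub_pair_cone_completion[OF assms]])
      (auto simp: pair_cone_completion_def)
  moreover have "pair_cone_completion X Y B \<inter> Y \<subseteq> B"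
    unfolding pair_cone_completion_def by blast
  ultimately show ?thesis
    by blast
qed

lemma ratio_lt_of_balanced:
  fixes ha hb fa fb s t u w :: real
  assumes "0 < ha" "0 < s" "0 < t" "s * ha + t * hb = 0" "s * fa + t * fb = 1"
    "0 \<le> u" "0 \<le> w" "u * ha + w * hb < 0"
  shows "(u * fa + w * fb) / (u * ha + w * hb) < fa / ha"
proof -
  define hv where "hv = u * ha + w * hb"
  define fv where "fv = u * fa + w * fb"
  have "t * (ha * fb - hb * fa) = ha"
  proof -
    have "t * (ha * fb - hb * fa) = ha * (s * fa + t * fb) - fa * (s * ha + t * hb)"
      by (simp add: algebra_simps)
    then show ?thesis
      using assms(4,5) by simp
  qed
  then have "0 < ha * fb - hb * fa"
    using assms(1,3) by (metis zero_less_mult_pos)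
  moreover have "0 < w"
  proof (rule ccontr)
    assume "\<not> 0 < w"
    then have "w = 0"
      using assms(7) by simp
    moreover have "0 \<le> u * ha"
      using assms(1,6) by simp
    ultimately show False
      using assms(8) by simp
  qed
  moreover have "fa * hv - fv * ha = - (w * (ha * fb - hb * fa))"
    unfolding hv_def fv_def by (simp add: algebra_simps)
  ultimately have "fa * hv - fv * ha < 0"
    by simp
  moreover have "ha * hv < 0"
    using assms(1,8) unfolding hv_def by (simp add: mult_pos_neg)
  ultimately have "0 < (fa * hv - fv * ha) / (ha * hv)"
    by (simp add: divide_neg_neg)
  also have "\<dots> = fa / ha - fv / hv"
    using assms(1,8) unfolding hv_def by (simp add: diff_frac_eq)
  finally show ?thesis
    unfolding hv_def fv_def by simp
qed
lemma larger_ratio_exists: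
  fixes ha hb fa fb s t u w :: real
  assumes "0 < s" "0 < t" "s * ha + t * hb = 0" "s * fa + t * fb = 1"
    "0 \<le> u" "0 \<le> w" "u * ha + w * hb < 0"
  shows "(0 < ha \<and> (u * fa + w * fb) / (u * ha + w * hb) < fa / ha) \<or>
    (0 < hb \<and> (u * fa + w * fb) / (u * ha + w * hb) < fb / hb)"
proof (cases "0 < ha")
  case True
  then show ?thesis
    using ratio_lt_of_balanced[OF True assms] by blast
next
  case False
  then have "0 \<le> t * hb"
    using assms(1,3) by (smt (verit) mult_pos_pos zero_less_mult_iff)
  moreover have "hb \<noteq> 0"
  proof
    assume "hb = 0"
    then have "ha = 0"
      using assms(1,3) by simp
    then show False
      using assms(7) \<open>hb = 0\<close> by simp
  qed
  ultimately have "0 < hb"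
    using assms(2) by (simp add: zero_le_mult_iff)
  then have "(w * fb + u * fa) / (w * hb + u * ha) < fb / hb"
    using ratio_lt_of_balanced[of hb t s ha fb fa w u] assms by (simp add: add.commute)
  then show ?thesis
    using \<open>0 < hb\<close> by (simp add: add.commute)
qed

lemma coordinate_functionals:
  fixes w1 w2 x :: "'a::euclidean_space"
  assumes "w1 \<noteq> 0" "w2 \<notin> span {w1}" "x \<notin> span {w1, w2}"
  obtains H \<Phi> :: "'a \<Rightarrow> real" where "linear H" "H x = 1" "H w1 = 0" "H w2 = 0"
    "linear \<Phi>" "\<Phi> w1 = 1" "\<Phi> w2 = 0"
proof -
  have "independent {w1}"
    using assms(1) by (simp add: independent_insert)
  then have "independent {w2, w1}"
    by (rule independent_insertI[OF assms(2)])
  moreover have "x \<notin> span {w2, w1}"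
    using assms(3) by (simp add: insert_commute)
  ultimately have ind: "independent {x, w2, w1}"
    by (rule independent_insertI[rotated])
  have "w2 \<noteq> w1" "x \<noteq> w1" "x \<noteq> w2"
    using assms(2,3) span_base[of w1 "{w1}"] span_base[of _ "{w1, w2}"] by auto
  obtain H :: "'a \<Rightarrow> real" where "linear H" "H x = 1" "H w1 = 0" "H w2 = 0"
    using linear_independent_extend[OF ind, of "\<lambda>v. if v = x then 1 else 0"]
      \<open>x \<noteq> w1\<close> \<open>x \<noteq> w2\<close> by auto
  moreover obtain \<Phi> :: "'a \<Rightarrow> real" where "linear \<Phi>" "\<Phi> w1 = 1" "\<Phi> w2 = 0"
    using linear_independent_extend[OF ind, of "\<lambda>v. if v = w1 then 1 else 0"]
      \<open>w2 \<noteq> w1\<close> by auto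
  ultimately show ?thesis
    using that by blast
qed

lemma init_seg_Suc: "init_seg g (Suc i) = insert (g i) (init_seg g i)"
  unfolding init_seg_def by (simp add: lessThan_Suc)

lemma init_seg_mono: "i \<le> j \<Longrightarrow> init_seg g i \<subseteq> init_seg g j"
  unfolding init_seg_def by auto

lemma finite_init_seg: "finite (init_seg g i)"
  unfolding init_seg_def by simp

lemma mem_init_seg: "j < i \<Longrightarrow> g j \<in> init_seg g i"
  unfolding init_seg_def by simp

definition fundamentals_first :: "'a::euclidean_space set \<Rightarrow> (nat \<Rightarrow> 'a) \<Rightarrow> nat set \<Rightarrow> bool" where
  "fundamentals_first X g K \<longleftrightarrow>
     (\<forall>Y \<alpha> \<beta>. two_dim_linear_subset X Y \<and> fundamental Y \<alpha> \<beta> \<longrightarrow>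
        (\<forall>i\<in>K. \<forall>j\<in>K. g i \<in> {\<alpha>, \<beta>} \<and> g j \<in> Y - {\<alpha>, \<beta>} \<longrightarrow> i < j))"

lemma suitable_iff:
  "suitable X g K \<longleftrightarrow>
    fundamentals_first X g K \<and> (\<forall>i. {..<i} \<subseteq> K \<longrightarrow> clean_triples X (init_seg g i))"
  unfolding suitable_def fundamentals_first_def clean_triples_def by blast

primrec greedy_extension :: "(nat \<Rightarrow> 'a::real_vector) \<Rightarrow> nat \<Rightarrow> 'a set \<Rightarrow> nat \<Rightarrow> 'a set" where
  "greedy_extension g m U 0 = U"
| "greedy_extension g m U (Suc n) =
    (let B = greedy_extension g m U n; \<gamma> = g (m + n)
     in if biclosed_sub (init_seg g (Suc (m + n))) (insert \<gamma> B) then insert \<gamma> B else B)"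

lemma greedy_extension_mono: "n \<le> n' \<Longrightarrow> greedy_extension g m U n \<subseteq> greedy_extension g m U n'"
  by (rule lift_Suc_mono_le[of "greedy_extension g m U"]) (auto simp: Let_def)

locale suitable_ordering =
  fixes X :: "'a::euclidean_space set" and g :: "nat \<Rightarrow> 'a" and K :: "nat set"
  assumes ordering: "ordering_of X g K"
    and fundamental_pairs: "has_fundamental_pairs X"
    and fundamentals_first: "fundamentals_first X g K"
    and clean_triples_init_seg: "{..<i} \<subseteq> K \<Longrightarrow> clean_triples X (init_seg g i)"
begin

lemma index_downward: "i \<in> K \<Longrightarrow> j \<le> i \<Longrightarrow> j \<in> K"
  using ordering unfolding ordering_of_def by (metis le_neq_implies_less)

lemma image_index: "g ` K = X"
  using ordering unfolding ordering_of_def by blast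

lemma init_seg_subset: "{..<i} \<subseteq> K \<Longrightarrow> init_seg g i \<subseteq> X"
  using image_index unfolding init_seg_def by blast

lemma notin_init_seg:
  assumes "j \<in> K" "i \<le> j"
  shows "g j \<notin> init_seg g i"
proof
  assume "g j \<in> init_seg g i"
  then obtain l where "l < i" "g j = g l"
    unfolding init_seg_def by blast
  moreover have "l \<in> K"
    using index_downward assms \<open>l < i\<close> by simp
  ultimately show False
    using ordering assms unfolding ordering_of_def by (metis inj_onD not_le)
qed

lemma greedy_extension_Int_init_seg:
  "{..<m + n} \<subseteq> K \<Longrightarrow> U \<subseteq> init_seg g m \<Longrightarrow> greedy_extension g m U n \<inter> init_seg g m = U"
proof (induction n)
  case 0
  then show ?case by auto
next
  case (Suc n)
  have "m + n \<in> K"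
    using Suc.prems(1) by auto
  then have "g (m + n) \<notin> init_seg g m"
    using notin_init_seg by simp
  moreover have "greedy_extension g m U n \<inter> init_seg g m = U"
    using Suc by force
  ultimately show ?case
    by (auto simp: Let_def)
qed

lemma biclosed_greedy_extension:
  "{..<m + n} \<subseteq> K \<Longrightarrow> 0 \<notin> init_seg g (m + n) \<Longrightarrow> biclosed_sub (init_seg g m) U \<Longrightarrow>
    biclosed_sub (init_seg g (m + n)) (greedy_extension g m U n)"
proof (induction n)
  case 0
  then show ?case by simp
next
  case (Suc n)
  let ?Y = "init_seg g (m + n)" and ?\<gamma> = "g (m + n)" and ?B = "greedy_extension g m U n"
  have K: "{..<m + n} \<subseteq> K" "m + n \<in> K"
    using Suc.prems(1) by auto
  have Y: "init_seg g (m + Suc n) = insert ?\<gamma> ?Y"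
    by (simp add: init_seg_Suc)
  then have "0 \<notin> ?Y" "?\<gamma> \<noteq> 0"
    using Suc.prems(2) by auto
  then have "biclosed_sub ?Y ?B"
    using Suc.IH K(1) Suc.prems(3) by blast
  then have "biclosed_sub (insert ?\<gamma> ?Y) ?B \<or> biclosed_sub (insert ?\<gamma> ?Y) (insert ?\<gamma> ?B)"
    using biclosed_sub_insert[OF fundamental_pairs clean_triples_init_seg[OF K(1)]
        init_seg_subset[OF K(1)] \<open>0 \<notin> ?Y\<close> _ _ _ \<open>?\<gamma> \<noteq> 0\<close>]
      image_index K(2) notin_init_seg[OF K(2)] by blast
  then show ?case
    using Y by (auto simp: Let_def)
qed

lemma closed_sub_greedy_extension_Union:
  assumes "0 \<notin> X" "biclosed_sub (init_seg g m) U"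
  shows "closed_sub X (\<Union>n\<in>{n. {..<m + n} \<subseteq> K}. greedy_extension g m U n)"
    (is "closed_sub X (\<Union>n\<in>?R. ?E n)")
proof -
  have bic: "biclosed_sub (init_seg g (m + n)) (?E n)" if "n \<in> ?R" for n
    using biclosed_greedy_extension that assms init_seg_subset by blast
  show ?thesis
    unfolding closed_sub_def
  proof (intro conjI ballI)
    show "(\<Union>n\<in>?R. ?E n) \<subseteq> X"
      using bic biclosed_sub_subset init_seg_subset by blast
  next
    fix \<alpha> \<beta> z assume "\<alpha> \<in> (\<Union>n\<in>?R. ?E n)" "\<beta> \<in> (\<Union>n\<in>?R. ?E n)"
      and z: "z \<in> nonneg_span {\<alpha>, \<beta>} \<inter> X"
    then obtain n1 n2 j where n: "n1 \<in> ?R" "\<alpha> \<in> ?E n1" "n2 \<in> ?R" "\<beta> \<in> ?E n2"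
      and j: "j \<in> K" "z = g j"
      using image_index by blast
    define n where "n = max (max n1 n2) (Suc j - m)"
    have "i \<in> K" if "i < m + n" for i
    proof -
      have "i < m + n1 \<or> i < m + n2 \<or> i \<le> j"
        using that unfolding n_def by auto
      then show ?thesis
        using n(1,3) index_downward[OF j(1)] by auto
    qed
    then have "n \<in> ?R"
      by auto
    moreover have "n1 \<le> n" "n2 \<le> n"
      unfolding n_def by auto
    then have "\<alpha> \<in> ?E n" "\<beta> \<in> ?E n"
      using n greedy_extension_mono by blast+
    moreover have "j < m + n"
      unfolding n_def by auto
    then have "z \<in> init_seg g (m + n)"
      using mem_init_seg j(2) by simp
    ultimately have "z \<in> ?E n"
      using closed_subD[OF biclosed_sub_closed[OF bic]] z by blast
    then show "z \<in> (\<Union>n\<in>?R. ?E n)"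
      using \<open>n \<in> ?R\<close> by blast
  qed
qed

lemma closure_in_Int_init_seg_if_zero_notin:
  assumes "0 \<notin> X" "{..<m} \<subseteq> K" "biclosed_sub (init_seg g m) U"
  shows "closure_in X U \<inter> init_seg g m \<subseteq> U"
proof -
  let ?C = "\<Union>n\<in>{n. {..<m + n} \<subseteq> K}. greedy_extension g m U n"
  have "U \<subseteq> ?C"
    using assms(2) by (metis (mono_tags) UN_upper add_0_right greedy_extension.simps(1) mem_Collect_eq)
  then have "closure_in X U \<subseteq> ?C"
    using closed_sub_greedy_extension_Union[OF assms(1,3)] closure_in_subset_closed by blast
  moreover have "?C \<inter> init_seg g m \<subseteq> U"
    using greedy_extension_Int_init_seg biclosed_sub_subset[OF assms(3)] by blast
  ultimately show ?thesis
    by blast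
qed

context
  fixes k0 assumes zero_index: "k0 \<in> K" and zero_at: "g k0 = 0"
begin

lemma lessThan_zero_index_subset: "{..<k0} \<subseteq> K"
  using index_downward zero_index by auto

lemma fundamental_in_init_seg_zero:
  assumes "two_dim_linear_subset X Y" "fundamental Y \<alpha> \<beta>"
  shows "\<alpha> \<in> init_seg g k0"
proof -
  have "\<alpha> \<in> X"
    using assms two_dim_linear_subset_subset unfolding fundamental_def by blast
  then obtain i where i: "i \<in> K" "\<alpha> = g i"
    using image_index by auto
  have "0 \<in> Y"
    using two_dim_linear_subset_zero[OF assms(1)] image_index zero_index zero_at by force
  moreover have "\<alpha> \<noteq> 0" "\<beta> \<noteq> 0"
    using fundamental_nonzero assms(2) fundamental_commute by blast+
  ultimately have "g k0 \<in> Y - {\<alpha>, \<beta>}"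
    using zero_at by auto
  then have "i < k0"
    using fundamentals_first assms i zero_index unfolding fundamentals_first_def by blast
  then show ?thesis
    using i mem_init_seg by metis
qed

lemma outside_in_open_cone:
  assumes "\<gamma> \<in> X" "\<gamma> \<notin> init_seg g k0" "\<gamma> \<noteq> 0" "v \<in> X" "v \<notin> span {\<gamma>}"
  obtains \<alpha> \<beta> s t where "\<alpha> \<in> init_seg g k0" "\<beta> \<in> init_seg g k0" "0 < s" "0 < t"
    "\<gamma> = s *\<^sub>R \<alpha> + t *\<^sub>R \<beta>" "\<alpha> \<in> span {\<gamma>, v}" "\<beta> \<in> span {\<gamma>, v}" "v \<in> nonneg_span {\<alpha>, \<beta>}"
proof -
  let ?Y = "X \<inter> span {\<gamma>, v}"
  have Y: "two_dim_linear_subset X ?Y"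
    using assms(1,4,3,5) by (rule two_dim_linear_subset_pair)
  then obtain \<alpha> \<beta> where f: "fundamental ?Y \<alpha> \<beta>"
    using fundamental_pairs unfolding has_fundamental_pairs_def by blast
  have Q: "\<alpha> \<in> init_seg g k0" "\<beta> \<in> init_seg g k0"
    using fundamental_in_init_seg_zero[OF Y] f fundamental_commute by blast+
  have in_Y: "\<gamma> \<in> ?Y" "v \<in> ?Y"
    using assms(1,4) by (auto intro: span_base)
  have cone: "?Y \<subseteq> nonneg_span {\<alpha>, \<beta>}" and "\<alpha> \<in> ?Y" "\<beta> \<in> ?Y"
    using f unfolding fundamental_def by blast+
  obtain s t where st: "0 \<le> s" "0 \<le> t" "\<gamma> = s *\<^sub>R \<alpha> + t *\<^sub>R \<beta>"
    using cone in_Y nonneg_span_pair by blast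
  have "\<gamma> \<noteq> \<alpha>" "\<gamma> \<noteq> \<beta>"
    using Q assms(2) by auto
  have "s \<noteq> 0"
    by (rule fundamental_coeff_nonzero[OF f in_Y(1) \<open>\<gamma> \<noteq> \<beta>\<close> assms(3) st(3,2)])
  moreover have "\<gamma> = t *\<^sub>R \<beta> + s *\<^sub>R \<alpha>"
    using st(3) by (simp add: add.commute)
  then have "t \<noteq> 0"
    by (rule fundamental_coeff_nonzero[OF fundamental_commute[OF f] in_Y(1) \<open>\<gamma> \<noteq> \<alpha>\<close> assms(3) _ st(1)])
  ultimately have "0 < s" "0 < t"
    using st(1,2) by auto
  moreover have "v \<in> nonneg_span {\<alpha>, \<beta>}"
    using cone in_Y(2) by blast
  ultimately show ?thesis
    using that[OF Q _ _ st(3)] \<open>\<alpha> \<in> ?Y\<close> \<open>\<beta> \<in> ?Y\<close> by blast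
qed

lemma not_in_span_if_kernel:
  fixes H :: "'a \<Rightarrow> real"
  assumes "linear H" "H w = 0" "H p \<noteq> 0"
  shows "p \<notin> span {w}"
proof
  assume "p \<in> span {w}"
  then obtain c where "p = c *\<^sub>R w"
    by (auto simp: span_singleton)
  then have "H p = c * H w"
    using assms(1) by (simp add: linear_scale)
  then show False
    using assms(2,3) by simp
qed

lemma same_ratio_below:
  fixes H \<Phi> :: "'a \<Rightarrow> real"
  assumes "linear H" "linear \<Phi>" "w \<in> X" "w \<notin> init_seg g k0" "w \<noteq> 0" "H w = 0" "\<Phi> w = 0"
    "p \<in> X" "0 < H p"
  shows "\<exists>q\<in>init_seg g k0. H q < 0 \<and> \<Phi> q / H q = \<Phi> p / H p"
proof -
  have "p \<notin> span {w}"
    using not_in_span_if_kernel[OF assms(1,6)] assms(9) by simp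
  then obtain \<alpha> \<beta> s t where ab: "\<alpha> \<in> init_seg g k0" "\<beta> \<in> init_seg g k0" "0 < s" "0 < t"
    "w = s *\<^sub>R \<alpha> + t *\<^sub>R \<beta>" "\<alpha> \<in> span {w, p}" "\<beta> \<in> span {w, p}" "p \<in> nonneg_span {\<alpha>, \<beta>}"
    by (rule outside_in_open_cone[OF assms(3,4,5,8)])
  have ratio: "\<Phi> q / H q = \<Phi> p / H p" if q: "q \<in> span {w, p}" "H q < 0" for q
  proof -
    obtain a b where "q = a *\<^sub>R w + b *\<^sub>R p"
      using q(1) unfolding span_pair_iff by blast
    then have "H q = b * H p" "\<Phi> q = b * \<Phi> p"
      using assms(1,2,6,7) by (simp_all add: linear_add linear_scale)
    moreover have "b \<noteq> 0"
      using q(2) calculation(1) by auto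
    ultimately show ?thesis
      by simp
  qed
  have "H \<alpha> < 0 \<or> H \<beta> < 0"
  proof (rule ccontr)
    assume "\<not> ?thesis"
    then have "0 \<le> s * H \<alpha>" "0 \<le> t * H \<beta>"
      using ab(3,4) by simp_all
    moreover have "s * H \<alpha> + t * H \<beta> = 0"
      using ab(5) assms(1,6) by (simp add: linear_add linear_scale)
    ultimately have "s * H \<alpha> = 0" "t * H \<beta> = 0"
      by linarith+
    then have "H \<alpha> = 0" "H \<beta> = 0"
      using ab(3,4) by simp_all
    obtain u u' where "p = u *\<^sub>R \<alpha> + u' *\<^sub>R \<beta>"
      using ab(8) nonneg_span_pair by blast
    then have "H p = 0"
      using \<open>H \<alpha> = 0\<close> \<open>H \<beta> = 0\<close> assms(1) by (simp add: linear_add linear_scale)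
    then show False
      using assms(9) by simp
  qed
  then show ?thesis
    using ratio ab(1,2,6,7) by blast
qed

lemma larger_ratio_above:
  fixes H \<Phi> :: "'a \<Rightarrow> real"
  assumes "linear H" "linear \<Phi>" "w \<in> X" "w \<notin> init_seg g k0" "w \<noteq> 0" "H w = 0" "\<Phi> w = 1"
    "v \<in> X" "H v < 0"
  shows "\<exists>q\<in>init_seg g k0. 0 < H q \<and> \<Phi> v / H v < \<Phi> q / H q"
proof -
  have "v \<notin> span {w}"
    using not_in_span_if_kernel[OF assms(1,6)] assms(9) by simp
  then obtain \<alpha> \<beta> s t where ab: "\<alpha> \<in> init_seg g k0" "\<beta> \<in> init_seg g k0" "0 < s" "0 < t"
    "w = s *\<^sub>R \<alpha> + t *\<^sub>R \<beta>" "\<alpha> \<in> span {w, v}" "\<beta> \<in> span {w, v}" "v \<in> nonneg_span {\<alpha>, \<beta>}"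
    by (rule outside_in_open_cone[OF assms(3,4,5,8)])
  obtain u u' where uu: "0 \<le> u" "0 \<le> u'" "v = u *\<^sub>R \<alpha> + u' *\<^sub>R \<beta>"
    using ab(8) nonneg_span_pair by blast
  have w: "s * H \<alpha> + t * H \<beta> = 0" "s * \<Phi> \<alpha> + t * \<Phi> \<beta> = 1"
    using ab(5) assms(1,2,6,7) by (simp_all add: linear_add linear_scale)
  have v: "H v = u * H \<alpha> + u' * H \<beta>" "\<Phi> v = u * \<Phi> \<alpha> + u' * \<Phi> \<beta>"
    using uu(3) assms(1,2) by (simp_all add: linear_add linear_scale)
  have "(0 < H \<alpha> \<and> \<Phi> v / H v < \<Phi> \<alpha> / H \<alpha>) \<or> (0 < H \<beta> \<and> \<Phi> v / H v < \<Phi> \<beta> / H \<beta>)"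
    unfolding v by (rule larger_ratio_exists[OF ab(3,4) w uu(1,2)]) (use assms(9) v in simp)
  then show ?thesis
    using ab(1,2) by blast
qed

text \<open>Take coordinates H along x and \<Phi> along w1 with respect to w1, w2, x. The ratio
  \<Phi> q / H q over the finitely many q in init_seg g k0 with H q > 0 then has no maximum:
  each of its values recurs below the plane H = 0 and is exceeded above it.\<close>
lemma subset_span_outside_pair:
  assumes "w1 \<in> X" "w1 \<notin> init_seg g k0" "w1 \<noteq> 0" "w2 \<in> X" "w2 \<notin> init_seg g k0" "w2 \<notin> span {w1}"
  shows "X \<subseteq> span {w1, w2}"
proof
  fix x assume "x \<in> X"
  show "x \<in> span {w1, w2}"
  proof (rule ccontr)
    assume "x \<notin> span {w1, w2}"
    then obtain H \<Phi> :: "'a \<Rightarrow> real" where H: "linear H" "H x = 1" "H w1 = 0" "H w2 = 0"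
      and \<Phi>: "linear \<Phi>" "\<Phi> w1 = 1" "\<Phi> w2 = 0"
      by (rule coordinate_functionals[OF assms(3,6)])
    have "w2 \<noteq> 0"
      using assms(6) span_zero by auto
    define r where "r q = \<Phi> q / H q" for q
    define S where "S = {q \<in> init_seg g k0. 0 < H q}"
    have below: "\<exists>q\<in>init_seg g k0. H q < 0 \<and> r q = r p" if "p \<in> X" "0 < H p" for p
      using same_ratio_below[OF H(1) \<Phi>(1) assms(4,5) \<open>w2 \<noteq> 0\<close> H(4) \<Phi>(3) that]
      unfolding r_def .
    have above: "\<exists>q\<in>S. r v < r q" if "v \<in> X" "H v < 0" for v
      using larger_ratio_above[OF H(1) \<Phi>(1) assms(1-3) H(3) \<Phi>(2) that]
      unfolding r_def S_def by blast
    have Q: "init_seg g k0 \<subseteq> X"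
      by (rule init_seg_subset[OF lessThan_zero_index_subset])
    have "S \<subseteq> init_seg g k0"
      unfolding S_def by blast
    then have "finite S"
      using finite_init_seg finite_subset by blast
    moreover have "S \<noteq> {}"
      using below[OF \<open>x \<in> X\<close>] above H(2) Q by fastforce
    ultimately have "Max (r ` S) \<in> r ` S"
      by (intro Max_in) auto
    then obtain p where p: "p \<in> S" "r p = Max (r ` S)"
      by (metis imageE)
    then obtain v where v: "v \<in> init_seg g k0" "H v < 0" "r v = r p"
      using below Q unfolding S_def by blast
    then obtain q where "q \<in> S" "r p < r q"
      using above Q by fastforce
    then show False
      using p Max_ge[of "r ` S" "r q"] \<open>finite S\<close> by fastforce
  qed
qed

lemma clean_init_seg_zero:
  assumes "w1 \<in> X" "w1 \<notin> init_seg g k0" "w1 \<noteq> 0" "w2 \<in> X" "w2 \<notin> init_seg g k0" "w2 \<notin> span {w1}"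
  shows "clean (init_seg g k0)"
proof -
  let ?Q = "init_seg g k0"
  note K = lessThan_zero_index_subset
  have "X \<inter> span {w1, w2} = X"
    using subset_span_outside_pair[OF assms] by blast
  then have X: "two_dim_linear_subset X X"
    using two_dim_linear_subset_pair[OF assms(1,4,3,6)] by simp
  then obtain \<rho> \<sigma> where f: "fundamental X \<rho> \<sigma>"
    using fundamental_pairs unfolding has_fundamental_pairs_def by blast
  then have "\<rho> \<in> ?Q" "\<sigma> \<in> ?Q"
    using fundamental_in_init_seg_zero[OF X] fundamental_commute by blast+
  then obtain F where F: "full X F" "\<rho> \<in> F" "\<sigma> \<in> F" "clean (F \<inter> ?Q)"
    using clean_triplesE[OF clean_triples_init_seg[OF K]] by metis
  have "X \<subseteq> F"
  proof
    fix y assume "y \<in> X"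
    then have "y \<in> span {\<rho>, \<sigma>}"
      using f nonneg_span_subset_span unfolding fundamental_def by blast
    then show "y \<in> F"
      using full_memI[OF F(1-3) \<open>y \<in> X\<close>] by blast
  qed
  then have "F \<inter> ?Q = ?Q"
    using init_seg_subset[OF K] by blast
  then show ?thesis
    using F(4) by simp
qed

lemma closure_in_Int_init_seg_zero:
  assumes "biclosed_sub (init_seg g k0) B"
  shows "closure_in X B \<inter> init_seg g k0 \<subseteq> B"
proof -
  let ?Q = "init_seg g k0"
  note K = lessThan_zero_index_subset
  have Q: "?Q \<subseteq> X" "0 \<notin> ?Q"
    using init_seg_subset[OF K] notin_init_seg[OF zero_index] zero_at by auto
  show ?thesis
  proof (cases "\<exists>v\<in>X - ?Q. \<exists>w\<in>X - ?Q. v \<noteq> 0 \<and> w \<notin> span {v}")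
    case True
    then have "clean ?Q"
      using clean_init_seg_zero by blast
    then show ?thesis
      using closure_in_Int_subset_if_clean Q assms by blast
  next
    case False
    then show ?thesis
      using closure_in_Int_subset_if_collinear_outside[OF clean_triples_init_seg[OF K] Q assms]
      by blast
  qed
qed

end

lemma closure_in_Int_init_seg_if_zero_after:
  assumes "k0 \<in> K" "g k0 = 0" "m \<le> k0" "biclosed_sub (init_seg g m) U"
  shows "closure_in X U \<inter> init_seg g m \<subseteq> U"
proof -
  let ?B = "greedy_extension g m U (k0 - m)"
  have K: "{..<m + (k0 - m)} \<subseteq> K"
    using index_downward assms(1,3) by auto
  have "0 \<notin> init_seg g (m + (k0 - m))"
    using notin_init_seg[OF assms(1)] assms(2,3) by auto
  then have "biclosed_sub (init_seg g k0) ?B"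
    using biclosed_greedy_extension[OF K _ assms(4)] assms(3) by simp
  then have "closure_in X ?B \<inter> init_seg g k0 \<subseteq> ?B"
    by (rule closure_in_Int_init_seg_zero[OF assms(1,2)])
  moreover have "?B \<inter> init_seg g m = U"
    by (rule greedy_extension_Int_init_seg[OF K biclosed_sub_subset[OF assms(4)]])
  moreover have "closure_in X U \<subseteq> closure_in X ?B"
    by (rule closure_in_mono) (use calculation(2) in blast)
  moreover have "init_seg g m \<subseteq> init_seg g k0"
    by (rule init_seg_mono[OF assms(3)])
  ultimately show ?thesis
    by blast
qed

end

theorem proposition3p2:
  fixes X :: "'a::euclidean_space set" and g :: "nat \<Rightarrow> 'a" and K :: "nat set"
    and m :: nat and U :: "'a set"
  assumes "ordering_of X g K"
    and "countable X"
    and "\<forall>Y. two_dim_linear_subset X Y \<longrightarrow> (\<exists>\<alpha> \<beta>. fundamental Y \<alpha> \<beta>)"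
    and "suitable X g K"
    and "{..<m} \<subseteq> K"
    and "biclosed_sub (init_seg g m) U"
  shows "closure_in X U \<inter> init_seg g m = U"
proof -
  interpret suitable_ordering X g K
    using assms(1,3,4) by unfold_locales (auto simp: has_fundamental_pairs_def suitable_iff)
  have "closure_in X U \<inter> init_seg g m \<subseteq> U"
  proof (cases "0 \<in> X")
    case False
    then show ?thesis
      using closure_in_Int_init_seg_if_zero_notin assms(5,6) by blast
  next
    case True
    then obtain k0 where k0: "k0 \<in> K" "g k0 = 0"
      using image_index by auto
    show ?thesis
    proof (cases "k0 < m")
      case True
      then have "0 \<in> init_seg g m"
        using mem_init_seg k0(2) by metis
      then show ?thesis
        using closure_in_Int_subset_if_zero_in assms(6) by blast
    next
      case False
      then show ?thesis
        using closure_in_Int_init_seg_if_zero_after k0 assms(6) by simp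
    qed
  qed
  then show ?thesis
    using closure_in_superset biclosed_sub_subset[OF assms(6)] by blast
qed

end
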